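(* Let $\mathcal O_5$ be the family of outerplanar graphs with girth at least $5$. Then every push graph whose underlying graph belongs to $\mathcal O_5$ admits a homomorphism to the directed $3$-cycle $\vec C_3$, and $\chi_p(\mathcal O_5)=3$.
   Context: An oriented graph is a directed graph with no loops and no pair of opposite arcs; an orientation of an undirected simple graph $G$ is an oriented graph obtained by orienting each edge of $G$. A homomorphism of an oriented graph $\vec G$ to an oriented graph $\vec H$ is a map $\varphi:V(\vec G)\to V(\vec H)$ with $\varphi(u)\varphi(v)$ an arc of $\vec H$ whenever $uv$ is an arc of $\vec G$. To push a vertex means to reverse all arcs incident with it. The push graph $[\vec G]$ is the set of oriented graphs obtainable from $\vec G$ by pushing some set of vertices (its presentations); its underlying graph is the common underlying graph of its presentations. A push graph $[\vec G]$ admits a homomorphism to an oriented graph $\vec H$ if some presentation of $[\vec G]$ does. The push chromatic number $\chi_p([\vec G])$ is the minimum number of vertices of an oriented graph $\vec H$ with $[\vec G]\to\vec H$; for an undirected graph $G$, $\chi_p(G)$ is the maximum of $\chi_p([\vec G])$ over all orientations $\vec G$ of $G$; for a family $\mathcal F$, $\chi_p(\mathcal F)$ is the maximum of $\chi_p(G)$ over $G\in\mathcal F$. The girth of a graph is the length of its shortest cycle (infinite for forests). *)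

theory Defs
  imports Main
begin

definition simple_graph :: "'a set \<Rightarrow> ('a \<Rightarrow> 'a \<Rightarrow> bool) \<Rightarrow> bool" where
  "simple_graph V E \<longleftrightarrow> finite V \<and> (\<forall>u v. E u v \<longrightarrow> u \<in> V \<and> v \<in> V)
     \<and> (\<forall>u v. E u v \<longrightarrow> E v u) \<and> (\<forall>u. \<not> E u u)"

text \<open>Outerplanar: the vertices can be placed in cyclic (here: linear) order on a circle
  so that the edges, drawn as chords, do not cross.\<close>
definition outerplanar :: "'a set \<Rightarrow> ('a \<Rightarrow> 'a \<Rightarrow> bool) \<Rightarrow> bool" where
  "outerplanar V E \<longleftrightarrow> (\<exists>f. bij_betw f V {0..<card V} \<and>
     (\<forall>a b c d. E a b \<and> E c d \<longrightarrow> \<not> (f a < f c \<and> f c < f b \<and> f b < f d)))"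

definition is_cycle :: "'a set \<Rightarrow> ('a \<Rightarrow> 'a \<Rightarrow> bool) \<Rightarrow> 'a list \<Rightarrow> bool" where
  "is_cycle V E cs \<longleftrightarrow> length cs \<ge> 3 \<and> distinct cs \<and> set cs \<subseteq> V
     \<and> (\<forall>i. Suc i < length cs \<longrightarrow> E (cs ! i) (cs ! Suc i))
     \<and> E (last cs) (hd cs)"

text \<open>Girth at least k (forests have infinite girth, so satisfy this for all k).\<close>
definition girth_at_least :: "'a set \<Rightarrow> ('a \<Rightarrow> 'a \<Rightarrow> bool) \<Rightarrow> nat \<Rightarrow> bool" where
  "girth_at_least V E k \<longleftrightarrow> (\<forall>cs. is_cycle V E cs \<longrightarrow> length cs \<ge> k)"

definition oriented_graph :: "'b set \<Rightarrow> ('b \<Rightarrow> 'b \<Rightarrow> bool) \<Rightarrow> bool" where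
  "oriented_graph W B \<longleftrightarrow> finite W \<and> (\<forall>u v. B u v \<longrightarrow> u \<in> W \<and> v \<in> W)
     \<and> (\<forall>u. \<not> B u u) \<and> (\<forall>u v. B u v \<longrightarrow> \<not> B v u)"

definition orientation :: "'a set \<Rightarrow> ('a \<Rightarrow> 'a \<Rightarrow> bool) \<Rightarrow> ('a \<Rightarrow> 'a \<Rightarrow> bool) \<Rightarrow> bool" where
  "orientation V E A \<longleftrightarrow> (\<forall>u v. A u v \<longrightarrow> E u v)
     \<and> (\<forall>u v. E u v \<longrightarrow> A u v \<or> A v u) \<and> (\<forall>u v. A u v \<longrightarrow> \<not> A v u)"

definition push :: "'a set \<Rightarrow> ('a \<Rightarrow> 'a \<Rightarrow> bool) \<Rightarrow> ('a \<Rightarrow> 'a \<Rightarrow> bool)" where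
  "push S A = (\<lambda>u v. if (u \<in> S) = (v \<in> S) then A u v else A v u)"

definition hom :: "'a set \<Rightarrow> ('a \<Rightarrow> 'a \<Rightarrow> bool) \<Rightarrow> 'b set \<Rightarrow> ('b \<Rightarrow> 'b \<Rightarrow> bool) \<Rightarrow> ('a \<Rightarrow> 'b) \<Rightarrow> bool" where
  "hom V A W B \<phi> \<longleftrightarrow> \<phi> ` V \<subseteq> W \<and> (\<forall>u v. A u v \<longrightarrow> B (\<phi> u) (\<phi> v))"

definition push_hom :: "'a set \<Rightarrow> ('a \<Rightarrow> 'a \<Rightarrow> bool) \<Rightarrow> 'b set \<Rightarrow> ('b \<Rightarrow> 'b \<Rightarrow> bool) \<Rightarrow> bool" where
  "push_hom V A W B \<longleftrightarrow> (\<exists>S \<subseteq> V. \<exists>\<phi>. hom V (push S A) W B \<phi>)"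

definition C3_verts :: "nat set" where "C3_verts = {0, 1, 2}"
definition C3_arcs :: "nat \<Rightarrow> nat \<Rightarrow> bool" where
  "C3_arcs u v \<longleftrightarrow> u < 3 \<and> v = (u + 1) mod 3"

text \<open>Push chromatic number of a push graph; target oriented graphs are taken with vertices
  in nat (every finite oriented graph is isomorphic to one of these).\<close>
definition push_chrom :: "'a set \<Rightarrow> ('a \<Rightarrow> 'a \<Rightarrow> bool) \<Rightarrow> nat" where
  "push_chrom V A = (LEAST k. \<exists>W B. oriented_graph (W :: nat set) B \<and> card W = k \<and> push_hom V A W B)"

definition push_chrom_graph :: "'a set \<Rightarrow> ('a \<Rightarrow> 'a \<Rightarrow> bool) \<Rightarrow> nat" where
  "push_chrom_graph V E = Sup {push_chrom V A | A. orientation V E A}"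

text \<open>The family O_5 (graphs with vertex set in nat; every finite graph is isomorphic to one).\<close>
definition O5 :: "(nat set \<times> (nat \<Rightarrow> nat \<Rightarrow> bool)) set" where
  "O5 = {(V, E). simple_graph V E \<and> outerplanar V E \<and> girth_at_least V E 5}"

definition push_chrom_family :: "(nat set \<times> (nat \<Rightarrow> nat \<Rightarrow> bool)) set \<Rightarrow> nat" where
  "push_chrom_family F = Sup {push_chrom_graph V E | V E. (V, E) \<in> F}"

end

theory Submission
  imports Defs
begin

(*
  A vertex of a push graph is mapped to the directed triangle by giving it a colour in Z_3
  and deciding whether to push it; along an edge the colour then changes by +1 or -1, the
  sign being fixed by the orientation of the edge and by whether its ends are pushed alike.
  Hence, whatever the pushes at its ends, a path of length 4 joins any two distinct colours
  and a path of length 5 any two colours. An outerplanar graph of girth at least 5 and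
  minimum degree at least 2 contains such a path whose inner vertices have degree 2: a
  thread of length 4 whose ends are adjacent, or a thread of length 5; it is found by
  walking under an innermost chord of the outer cycle. Removing the inner vertices of the
  thread, or a vertex of degree at most 1, and colouring the rest by induction gives the
  homomorphism to the directed triangle. Every push of the directed 5-cycle needs a target
  with three vertices: adjacent vertices have distinct images in an oriented graph, and the
  5-cycle is odd.
*)

section \<open>Pushed colourings of paths\<close>

text \<open>A vertex gets a colour c < 3 in the directed triangle and a flag s telling whether it
  is pushed. C3_pushed_arc c s c' s' says that an arc from a vertex with (c, s) to one with
  (c', s') is mapped onto an arc of the triangle after pushing; compatible d does the same
  for an edge which is oriented forwards iff d.\<close>

definition C3_pushed_arc :: "nat \<Rightarrow> bool \<Rightarrow> nat \<Rightarrow> bool \<Rightarrow> bool" where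
  "C3_pushed_arc c s c' s' \<longleftrightarrow> (if s = s' then C3_arcs c c' else C3_arcs c' c)"

definition compatible :: "bool \<Rightarrow> nat \<Rightarrow> bool \<Rightarrow> nat \<Rightarrow> bool \<Rightarrow> bool" where
  "compatible d c s c' s' \<longleftrightarrow> (if d then C3_pushed_arc c s c' s' else C3_pushed_arc c' s' c s)"

lemma less_3_cases: "(c::nat) < 3 \<longleftrightarrow> c = 0 \<or> c = 1 \<or> c = 2"
  by auto

lemma compatible_iff:
  "compatible d c s c' s' \<longleftrightarrow> c < 3 \<and> c' = (c + (if d = (s = s') then 1 else 2)) mod 3"
  unfolding compatible_def C3_pushed_arc_def C3_arcs_def less_3_cases by auto

lemma compatible_imp_less_3: "compatible d c s c' s' \<Longrightarrow> c < 3 \<and> c' < 3"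
  unfolding compatible_iff by auto

lemma compatible_imp_neq: "compatible d c s c' s' \<Longrightarrow> c \<noteq> c'"
  unfolding compatible_iff by (auto simp: less_3_cases)

lemma compatible_leaf: "c < 3 \<Longrightarrow> \<exists>c'. compatible d c s c' s"
  unfolding compatible_iff by simp

lemma compatible_avoiding:
  assumes "c' < 3"
  shows "\<exists>c s. compatible d c s c' s' \<and> c \<noteq> c0"
proof (cases "(c' + 2) mod 3 = c0")
  case True
  show ?thesis
    by (rule exI[of _ "(c' + 1) mod 3"], rule exI[of _ "s' \<noteq> d"])
      (use assms True in \<open>auto simp: compatible_iff less_3_cases\<close>)
next
  case False
  show ?thesis
    by (rule exI[of _ "(c' + 2) mod 3"], rule exI[of _ "s' = d"])
      (use assms False in \<open>auto simp: compatible_iff less_3_cases\<close>)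
qed

lemma compatible_path2_iff:
  assumes "c0 < 3" "c2 < 3"
  shows "(\<exists>c1 s1. compatible d1 c0 s0 c1 s1 \<and> compatible d2 c1 s1 c2 s2) \<longleftrightarrow>
           ((c2 = c0) \<longleftrightarrow> ((d1 = d2) \<noteq> (s0 = s2)))"
  using assms unfolding less_3_cases compatible_iff
  by (elim disjE; cases s0; cases s2; cases d1; cases d2) (simp_all add: ex_bool_eq ex_disj_distrib)

lemma third_colour:
  assumes "c0 < 3" "c4 < 3" "c0 \<noteq> c4"
  shows "3 - c0 - c4 < 3" "3 - c0 - c4 \<noteq> c0" "3 - c0 - c4 \<noteq> (c4::nat)"
  using assms unfolding less_3_cases by auto

lemma compatible_path4:
  assumes "c0 < 3" "c4 < 3" "c0 \<noteq> c4"
  shows "\<exists>c1 s1 c2 s2 c3 s3. compatible d1 c0 s0 c1 s1 \<and> compatible d2 c1 s1 c2 s2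
           \<and> compatible d3 c2 s2 c3 s3 \<and> compatible d4 c3 s3 c4 s4"
proof -
  \<comment> \<open>s2 makes the first half force c2 \<noteq> c0; then c2 is c4 or the third colour\<close>
  define s2 where "s2 = (s0 = (d1 = d2))"
  define c2 where "c2 = (if (d3 = d4) \<noteq> (s2 = s4) then c4 else 3 - c0 - c4)"
  have "c2 < 3"
    using third_colour[OF assms] assms(2) unfolding c2_def by simp
  have "\<exists>c1 s1. compatible d1 c0 s0 c1 s1 \<and> compatible d2 c1 s1 c2 s2"
    unfolding compatible_path2_iff[OF \<open>c0 < 3\<close> \<open>c2 < 3\<close>]
    using third_colour[OF assms] assms(3) unfolding c2_def s2_def by auto
  moreover have "\<exists>c3 s3. compatible d3 c2 s2 c3 s3 \<and> compatible d4 c3 s3 c4 s4"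
    unfolding compatible_path2_iff[OF \<open>c2 < 3\<close> \<open>c4 < 3\<close>]
    using third_colour[OF assms] unfolding c2_def by auto
  ultimately show ?thesis by blast
qed

lemma compatible_path5:
  assumes "c0 < 3" "c5 < 3"
  shows "\<exists>c1 s1 c2 s2 c3 s3 c4 s4. compatible d1 c0 s0 c1 s1 \<and> compatible d2 c1 s1 c2 s2
           \<and> compatible d3 c2 s2 c3 s3 \<and> compatible d4 c3 s3 c4 s4 \<and> compatible d5 c4 s4 c5 s5"
proof -
  obtain c4 s4 where c4: "compatible d5 c4 s4 c5 s5" "c4 \<noteq> c0"
    using compatible_avoiding[OF assms(2)] by blast
  have "c4 < 3"
    using compatible_imp_less_3[OF c4(1)] by simp
  have "\<exists>c1 s1 c2 s2 c3 s3. compatible d1 c0 s0 c1 s1 \<and> compatible d2 c1 s1 c2 s2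
           \<and> compatible d3 c2 s2 c3 s3 \<and> compatible d4 c3 s3 c4 s4"
    using compatible_path4[OF assms(1) \<open>c4 < 3\<close> c4(2)[symmetric]] .
  with c4(1) show ?thesis by blast
qed

section \<open>Pushed colourings of oriented graphs\<close>

definition induced_on :: "('a \<Rightarrow> 'a \<Rightarrow> bool) \<Rightarrow> 'a set \<Rightarrow> 'a \<Rightarrow> 'a \<Rightarrow> bool" where
  "induced_on R W u v \<longleftrightarrow> R u v \<and> u \<in> W \<and> v \<in> W"

definition underlying :: "('a \<Rightarrow> 'a \<Rightarrow> bool) \<Rightarrow> 'a \<Rightarrow> 'a \<Rightarrow> bool" where
  "underlying A u v \<longleftrightarrow> A u v \<or> A v u"

lemma underlying_induced_on: "underlying (induced_on A W) = induced_on (underlying A) W"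
  unfolding underlying_def induced_on_def by auto

lemma oriented_graph_induced_on:
  "oriented_graph V A \<Longrightarrow> W \<subseteq> V \<Longrightarrow> oriented_graph W (induced_on A W)"
  unfolding oriented_graph_def induced_on_def using finite_subset by blast

lemma simple_graph_underlying: "oriented_graph V A \<Longrightarrow> simple_graph V (underlying A)"
  unfolding oriented_graph_def simple_graph_def underlying_def by blast

lemma orientation_oriented_graph:
  "simple_graph V E \<Longrightarrow> orientation V E A \<Longrightarrow> oriented_graph V A"
  unfolding simple_graph_def orientation_def oriented_graph_def by blast

lemma orientation_underlying: "simple_graph V E \<Longrightarrow> orientation V E A \<Longrightarrow> underlying A = E"
  unfolding simple_graph_def orientation_def underlying_def by (auto simp: fun_eq_iff)

definition push_colouring :: "('a \<Rightarrow> 'a \<Rightarrow> bool) \<Rightarrow> ('a \<Rightarrow> bool) \<Rightarrow> ('a \<Rightarrow> nat) \<Rightarrow> bool" where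
  "push_colouring A \<sigma> \<phi> \<longleftrightarrow>
     (\<forall>x. \<phi> x < 3) \<and> (\<forall>u v. A u v \<longrightarrow> C3_pushed_arc (\<phi> u) (\<sigma> u) (\<phi> v) (\<sigma> v))"

lemma C3_verts_eq: "C3_verts = {..<3}"
  unfolding C3_verts_def by auto

lemma push_colouring_push_hom:
  assumes col: "push_colouring A \<sigma> \<phi>" and AV: "\<forall>u v. A u v \<longrightarrow> u \<in> V \<and> v \<in> V"
  shows "push_hom V A C3_verts C3_arcs"
proof -
  define S where "S = {x \<in> V. \<sigma> x}"
  have "hom V (push S A) C3_verts C3_arcs \<phi>"
    unfolding hom_def
  proof (intro conjI allI impI)
    show "\<phi> ` V \<subseteq> C3_verts"
      using col unfolding push_colouring_def C3_verts_eq by auto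
  next
    fix u v
    assume "push S A u v"
    then show "C3_arcs (\<phi> u) (\<phi> v)"
      using col AV unfolding push_def push_colouring_def C3_pushed_arc_def S_def
      by (auto split: if_splits)
  qed
  moreover have "S \<subseteq> V"
    unfolding S_def by blast
  ultimately show ?thesis
    unfolding push_hom_def by blast
qed

lemma compatible_imp_C3_pushed_arc:
  assumes "compatible (A y z) (\<phi> y) (\<sigma> y) (\<phi> z) (\<sigma> z)" "\<forall>u v. A u v \<longrightarrow> \<not> A v u"
  shows "A y z \<Longrightarrow> C3_pushed_arc (\<phi> y) (\<sigma> y) (\<phi> z) (\<sigma> z)"
    and "A z y \<Longrightarrow> C3_pushed_arc (\<phi> z) (\<sigma> z) (\<phi> y) (\<sigma> y)"
  using assms unfolding compatible_def by auto

lemma push_colouring_compatible: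
  assumes "push_colouring A \<sigma> \<phi>" "underlying A u v"
  shows "compatible (A u v) (\<phi> u) (\<sigma> u) (\<phi> v) (\<sigma> v)"
  using assms unfolding push_colouring_def compatible_def underlying_def by auto

lemma push_colouring_extend:
  assumes og: "oriented_graph V A" and col: "push_colouring (induced_on A (V - X)) \<sigma> \<phi>"
    and same: "\<forall>x. x \<notin> X \<longrightarrow> \<phi>' x = \<phi> x \<and> \<sigma>' x = \<sigma> x"
    and less_3: "\<forall>x\<in>X. \<phi>' x < 3"
    and edges: "\<forall>u v. A u v \<longrightarrow> u \<in> X \<or> v \<in> X \<longrightarrow> (u, v) \<in> P \<or> (v, u) \<in> P"
    and comp: "\<forall>(y, z)\<in>P. compatible (A y z) (\<phi>' y) (\<sigma>' y) (\<phi>' z) (\<sigma>' z)"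
  shows "push_colouring A \<sigma>' \<phi>'"
  unfolding push_colouring_def
proof (intro conjI allI impI)
  fix x
  show "\<phi>' x < 3"
    using col same less_3 unfolding push_colouring_def by (cases "x \<in> X") auto
next
  fix u v
  assume uv: "A u v"
  have anti: "\<forall>u v. A u v \<longrightarrow> \<not> A v u"
    using og unfolding oriented_graph_def by blast
  show "C3_pushed_arc (\<phi>' u) (\<sigma>' u) (\<phi>' v) (\<sigma>' v)"
  proof (cases "u \<in> X \<or> v \<in> X")
    case True
    then have "(u, v) \<in> P \<or> (v, u) \<in> P"
      using edges uv by blast
    then show ?thesis
      using comp uv compatible_imp_C3_pushed_arc[OF _ anti] by blast
  next
    case False
    then have "induced_on A (V - X) u v"
      using uv og unfolding induced_on_def oriented_graph_def by blast
    then show ?thesis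
      using col same False unfolding push_colouring_def by auto
  qed
qed

lemma push_colouring_extend_pendant:
  assumes og: "oriented_graph V A" and col: "push_colouring (induced_on A (V - {x})) \<sigma> \<phi>"
    and pendant: "\<forall>y z. underlying A x y \<and> underlying A x z \<longrightarrow> y = z"
  shows "\<exists>\<sigma> \<phi>. push_colouring A \<sigma> \<phi>"
proof (cases "\<exists>y. underlying A x y")
  case True
  then obtain y where xy: "underlying A x y"
    by blast
  have "y \<noteq> x"
    using xy og unfolding underlying_def oriented_graph_def by blast
  obtain c where c: "compatible (A y x) (\<phi> y) (\<sigma> y) c (\<sigma> y)"
    using compatible_leaf col unfolding push_colouring_def by blast
  have "push_colouring A (\<sigma>(x := \<sigma> y)) (\<phi>(x := c))"
  proof (rule push_colouring_extend[OF og col, where P = "{(y, x)}"])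
    show "\<forall>u v. A u v \<longrightarrow> u \<in> {x} \<or> v \<in> {x} \<longrightarrow> (u, v) \<in> {(y, x)} \<or> (v, u) \<in> {(y, x)}"
      using pendant xy unfolding underlying_def by blast
  qed (use c compatible_imp_less_3[OF c] \<open>y \<noteq> x\<close> in auto)
  then show ?thesis
    by blast
next
  case False
  have "push_colouring A \<sigma> \<phi>"
    by (rule push_colouring_extend[OF og col, where P = "{}"])
      (use False in \<open>auto simp: underlying_def\<close>, use col in \<open>auto simp: push_colouring_def\<close>)
  then show ?thesis
    by blast
qed

section \<open>Threads in noncrossing graphs of girth 5\<close>

definition noncrossing :: "('a \<Rightarrow> nat) \<Rightarrow> ('a \<Rightarrow> 'a \<Rightarrow> bool) \<Rightarrow> bool" where
  "noncrossing p E \<longleftrightarrow> (\<forall>a b c d. E a b \<and> E c d \<longrightarrow> \<not> (p a < p c \<and> p c < p b \<and> p b < p d))"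

definition min_degree_2 :: "'a set \<Rightarrow> ('a \<Rightarrow> 'a \<Rightarrow> bool) \<Rightarrow> bool" where
  "min_degree_2 V E \<longleftrightarrow> (\<forall>x\<in>V. \<exists>y z. y \<noteq> z \<and> E x y \<and> E x z)"

fun inner_degree_2 :: "('a \<Rightarrow> 'a \<Rightarrow> bool) \<Rightarrow> 'a list \<Rightarrow> bool" where
  "inner_degree_2 E (u # v # w # ys) \<longleftrightarrow>
     (\<forall>z. E v z \<longrightarrow> z = u \<or> z = w) \<and> inner_degree_2 E (v # w # ys)"
| "inner_degree_2 E _ \<longleftrightarrow> True"

definition thread :: "('a \<Rightarrow> 'a \<Rightarrow> bool) \<Rightarrow> 'a list \<Rightarrow> bool" where
  "thread E ys \<longleftrightarrow> distinct ys \<and> successively E ys \<and> inner_degree_2 E ys"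

lemma successively_less_imp_distinct:
  fixes f :: "'a \<Rightarrow> 'b::preorder"
  assumes "successively (\<lambda>u v. f u < f v) xs"
  shows "distinct xs"
proof -
  have "sorted_wrt (\<lambda>u v. f u < f v) xs"
    using assms by (subst successively_conv_sorted_wrt[symmetric]) (auto simp: transp_def intro: less_trans)
  then show ?thesis
    by (induction xs) auto
qed

lemma outerplanar_noncrossing: "outerplanar V E \<Longrightarrow> \<exists>p. inj_on p V \<and> noncrossing p E"
  unfolding outerplanar_def noncrossing_def using bij_betw_imp_inj_on by blast

lemma noncrossing_induced_on: "noncrossing p E \<Longrightarrow> noncrossing p (induced_on E W)"
  unfolding noncrossing_def induced_on_def by blast

lemma is_cycle_iff_successively:
  "is_cycle V E cs \<longleftrightarrow>
     3 \<le> length cs \<and> distinct cs \<and> set cs \<subseteq> V \<and> successively E cs \<and> E (last cs) (hd cs)"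
  unfolding is_cycle_def successively_conv_nth by blast

lemma girth_at_least_induced_on:
  "girth_at_least V E k \<Longrightarrow> W \<subseteq> V \<Longrightarrow> girth_at_least W (induced_on E W) k"
  unfolding girth_at_least_def is_cycle_def induced_on_def by blast

lemma inner_degree_2_edge:
  assumes "inner_degree_2 E ys" "E u v" "u \<in> set (butlast (tl ys))"
  shows "(u, v) \<in> set (zip ys (tl ys)) \<or> (v, u) \<in> set (zip ys (tl ys))"
  using assms by (induction E ys rule: inner_degree_2.induct) auto

locale noncrossing_graph =
  fixes V :: "'a set" and E :: "'a \<Rightarrow> 'a \<Rightarrow> bool" and p :: "'a \<Rightarrow> nat"
  assumes simple: "simple_graph V E" and inj: "inj_on p V" and noncrossing: "noncrossing p E"
begin

lemma edge_in_V: "E u v \<Longrightarrow> u \<in> V \<and> v \<in> V"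
  using simple unfolding simple_graph_def by blast

lemma edge_sym: "E u v \<Longrightarrow> E v u"
  using simple unfolding simple_graph_def by blast

lemma p_eq_iff: "u \<in> V \<Longrightarrow> v \<in> V \<Longrightarrow> p u = p v \<longleftrightarrow> u = v"
  using inj unfolding inj_on_def by blast

lemma p_neq_of_edge: "E u v \<Longrightarrow> p u \<noteq> p v"
  using simple edge_in_V p_eq_iff unfolding simple_graph_def by metis

definition inner :: "'a \<Rightarrow> 'a \<Rightarrow> 'a \<Rightarrow> bool" where
  "inner a b x \<longleftrightarrow> x \<in> V \<and> p a < p x \<and> p x < p b"

definition chord :: "'a \<Rightarrow> 'a \<Rightarrow> bool" where
  "chord a b \<longleftrightarrow> E a b \<and> p a < p b \<and> (\<exists>x. inner a b x)"

definition innermost_chord :: "'a \<Rightarrow> 'a \<Rightarrow> bool" where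
  "innermost_chord a b \<longleftrightarrow> chord a b \<and> (\<forall>c d. chord c d \<longrightarrow> p b - p a \<le> p d - p c)"

lemma innermost_chord_exists:
  assumes "V \<noteq> {}" "min_degree_2 V E"
  shows "\<exists>a b. innermost_chord a b"
proof -
  obtain m where m: "m \<in> V" "\<forall>x\<in>V. p m \<le> p x"
    using ex_has_least_nat[of "\<lambda>x. x \<in> V"] assms(1) by blast
  obtain y z where yz: "y \<noteq> z" "E m y" "E m z"
    using assms(2) m(1) unfolding min_degree_2_def by blast
  have "p m < p y" "p m < p z" "p y \<noteq> p z"
    using m yz edge_in_V p_neq_of_edge p_eq_iff by (metis le_neq_implies_less)+
  then have "chord m y \<or> chord m z"
    using yz edge_in_V unfolding chord_def inner_def by (metis linorder_neqE_nat)
  then obtain c d where "chord c d"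
    by blast
  then obtain a b where "chord a b" "\<forall>c d. chord c d \<longrightarrow> p b - p a \<le> p d - p c"
    using ex_has_least_nat[of "\<lambda>(c, d). chord c d" "(c, d)" "\<lambda>(c, d). p d - p c"] by auto
  then show ?thesis
    unfolding innermost_chord_def by blast
qed

lemma chord_neighbour_range:
  assumes "chord a b" "inner a b x" "E x y"
  shows "p a \<le> p y \<and> p y \<le> p b"
proof -
  have "E a b" "E y x"
    using assms edge_sym unfolding chord_def by auto
  then show ?thesis
    using noncrossing assms(2,3) unfolding noncrossing_def inner_def by (meson not_le)
qed

lemma innermost_chord_edge_covers_nothing:
  assumes "innermost_chord a b" "inner a b x" "E x y" "w \<in> V"
  shows "\<not> (p y < p w \<and> p w < p x)" and "\<not> (p x < p w \<and> p w < p y)"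
proof -
  have range: "p a \<le> p y" "p y \<le> p b" "p a < p x" "p x < p b"
    using chord_neighbour_range assms unfolding innermost_chord_def inner_def by auto
  have minimal: "\<forall>c d. chord c d \<longrightarrow> p b - p a \<le> p d - p c"
    using assms(1) unfolding innermost_chord_def by blast
  show "\<not> (p y < p w \<and> p w < p x)"
  proof
    assume "p y < p w \<and> p w < p x"
    then have "chord y x"
      using assms(3,4) edge_sym unfolding chord_def inner_def by auto
    then show False
      using minimal range by fastforce
  qed
  show "\<not> (p x < p w \<and> p w < p y)"
  proof
    assume "p x < p w \<and> p w < p y"
    then have "chord x y"
      using assms(3,4) unfolding chord_def inner_def by auto
    then show False
      using minimal range by fastforce
  qed
qed

lemma innermost_chord_inner_neighbours:
  assumes ab: "innermost_chord a b" and deg: "min_degree_2 V E" and x: "inner a b x"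
  shows "\<exists>lo hi. (\<forall>y. E x y \<longleftrightarrow> y = lo \<or> y = hi)
           \<and> p a \<le> p lo \<and> p lo < p x \<and> p x < p hi \<and> p hi \<le> p b"
proof -
  note empty = innermost_chord_edge_covers_nothing[OF ab x]
  obtain y z where yz: "y \<noteq> z" "E x y" "E x z"
    using deg x unfolding min_degree_2_def inner_def by blast
  have V: "y \<in> V" "z \<in> V"
    using yz edge_in_V by auto
  have "p y \<noteq> p z" "p x \<noteq> p y" "p x \<noteq> p z"
    using yz V p_eq_iff p_neq_of_edge by auto
  then have sides: "(p y < p x \<and> p x < p z) \<or> (p z < p x \<and> p x < p y)"
    using empty[OF yz(2) V(2)] empty[OF yz(3) V(1)] by arith
  have only: "w = y \<or> w = z" if "E x w" for w
  proof -
    have "w \<in> V"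
      using that edge_in_V by blast
    then have "p w = p y \<or> p w = p z"
      using empty[OF that V(1)] empty[OF that V(2)] empty[OF yz(2) \<open>w \<in> V\<close>]
        empty[OF yz(3) \<open>w \<in> V\<close>] sides p_neq_of_edge[OF that] by arith
    then show ?thesis
      using \<open>w \<in> V\<close> V p_eq_iff by blast
  qed
  have "p a \<le> p y \<and> p y \<le> p b" "p a \<le> p z \<and> p z \<le> p b"
    using chord_neighbour_range ab x yz unfolding innermost_chord_def by auto
  then show ?thesis
    using sides yz only by blast
qed

lemma innermost_chord_walk_start:
  assumes ab: "innermost_chord a b" and deg: "min_degree_2 V E"
  shows "\<exists>x. E a x \<and> inner a b x"
proof -
  obtain x where x: "inner a b x" and least: "\<forall>w. inner a b w \<longrightarrow> p x \<le> p w"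
    using ab ex_has_least_nat[of "inner a b" _ p] unfolding innermost_chord_def chord_def by blast
  obtain lo where lo: "E x lo" "p a \<le> p lo" "p lo < p x"
    using innermost_chord_inner_neighbours[OF ab deg x] by blast
  have "lo \<in> V" "a \<in> V"
    using lo(1) ab edge_in_V unfolding innermost_chord_def chord_def by auto
  have "lo = a"
  proof (rule ccontr)
    assume "lo \<noteq> a"
    then have "inner a b lo"
      using lo x \<open>lo \<in> V\<close> \<open>a \<in> V\<close> p_eq_iff unfolding inner_def by fastforce
    then show False
      using least lo(3) by fastforce
  qed
  then show ?thesis
    using lo(1) x edge_sym by blast
qed

lemma innermost_chord_walk_step:
  assumes ab: "innermost_chord a b" and deg: "min_degree_2 V E" and x: "inner a b x"
    and w: "E w x" "p w < p x"
  shows "\<exists>y. E x y \<and> p x < p y \<and> (\<forall>z. E x z \<longrightarrow> z = w \<or> z = y) \<and> (y = b \<or> inner a b y)"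
proof -
  obtain lo hi where nbrs: "\<forall>y. E x y \<longleftrightarrow> y = lo \<or> y = hi"
    and order: "p lo < p x" "p x < p hi" "p hi \<le> p b"
    using innermost_chord_inner_neighbours[OF ab deg x] by blast
  have "w = lo"
    using nbrs w order edge_sym by fastforce
  moreover have "hi = b \<or> inner a b hi"
    using order nbrs x edge_in_V p_eq_iff ab
    unfolding innermost_chord_def chord_def inner_def by (metis le_neq_implies_less order.strict_trans)
  ultimately show ?thesis
    using nbrs order by blast
qed

lemma innermost_chord_walk3:
  assumes ab: "innermost_chord a b" and deg: "min_degree_2 V E" and girth: "girth_at_least V E 5"
  shows "\<exists>x1 x2 x3. E a x1 \<and> E x1 x2 \<and> E x2 x3 \<and> p a < p x1 \<and> p x1 < p x2 \<and> p x2 < p x3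
           \<and> (\<forall>z. E x1 z \<longrightarrow> z = a \<or> z = x2) \<and> (\<forall>z. E x2 z \<longrightarrow> z = x1 \<or> z = x3)
           \<and> inner a b x3"
proof -
  note step = innermost_chord_walk_step[OF ab deg]
  have no_short_cycle: "\<not> is_cycle V E cs" if "length cs < 5" for cs
    using girth that unfolding girth_at_least_def by fastforce
  have Eab: "E b a" "a \<in> V" "b \<in> V"
    using ab edge_sym edge_in_V unfolding innermost_chord_def chord_def by auto
  obtain x1 where x1: "E a x1" "inner a b x1"
    using innermost_chord_walk_start[OF ab deg] by blast
  then have "p a < p x1" "x1 \<in> V"
    unfolding inner_def by auto
  obtain x2 where x2: "E x1 x2" "p x1 < p x2" "\<forall>z. E x1 z \<longrightarrow> z = a \<or> z = x2" "x2 = b \<or> inner a b x2"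
    using step[OF x1(2) x1(1) \<open>p a < p x1\<close>] by blast
  have "x2 \<noteq> b"
  proof
    assume "x2 = b"
    have "distinct [a, x1, b]"
      using \<open>p a < p x1\<close> x2(2) \<open>x2 = b\<close> by (intro successively_less_imp_distinct[of p]) simp
    then have "is_cycle V E [a, x1, b]"
      using x1(1) x2(1) \<open>x2 = b\<close> Eab \<open>x1 \<in> V\<close> unfolding is_cycle_iff_successively by simp
    then show False
      using no_short_cycle by simp
  qed
  then have "inner a b x2" "x2 \<in> V"
    using x2(4) unfolding inner_def by auto
  obtain x3 where x3: "E x2 x3" "p x2 < p x3" "\<forall>z. E x2 z \<longrightarrow> z = x1 \<or> z = x3" "x3 = b \<or> inner a b x3"
    using step[OF \<open>inner a b x2\<close> x2(1,2)] by blast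
  have "x3 \<noteq> b"
  proof
    assume "x3 = b"
    have "distinct [a, x1, x2, b]"
      using \<open>p a < p x1\<close> x2(2) x3(2) \<open>x3 = b\<close> by (intro successively_less_imp_distinct[of p]) simp
    then have "is_cycle V E [a, x1, x2, b]"
      using x1(1) x2(1) x3(1) \<open>x3 = b\<close> Eab \<open>x1 \<in> V\<close> \<open>x2 \<in> V\<close>
      unfolding is_cycle_iff_successively by simp
    then show False
      using no_short_cycle by simp
  qed
  then show ?thesis
    using x1(1) \<open>p a < p x1\<close> x2(1-3) x3(1-4) by blast
qed

lemma thread_exists:
  assumes "V \<noteq> {}" "min_degree_2 V E" "girth_at_least V E 5"
  shows "(\<exists>a x1 x2 x3 b. E a b \<and> thread E [a, x1, x2, x3, b])
       \<or> (\<exists>x0 x1 x2 x3 x4 x5. thread E [x0, x1, x2, x3, x4, x5])"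
proof -
  obtain a b where ab: "innermost_chord a b"
    using innermost_chord_exists assms(1,2) by blast
  obtain x1 x2 x3 where x: "E a x1" "E x1 x2" "E x2 x3" "p a < p x1" "p x1 < p x2" "p x2 < p x3"
      "\<forall>z. E x1 z \<longrightarrow> z = a \<or> z = x2" "\<forall>z. E x2 z \<longrightarrow> z = x1 \<or> z = x3" "inner a b x3"
    using innermost_chord_walk3[OF ab assms(2,3)] by blast
  obtain x4 where x4: "E x3 x4" "p x3 < p x4" "\<forall>z. E x3 z \<longrightarrow> z = x2 \<or> z = x4" "x4 = b \<or> inner a b x4"
    using innermost_chord_walk_step[OF ab assms(2) x(9,3,6)] by blast
  show ?thesis
  proof (cases "x4 = b")
    case True
    have "distinct [a, x1, x2, x3, b]"
      using x(4-6) x4(2) True by (intro successively_less_imp_distinct[of p]) simp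
    then have "thread E [a, x1, x2, x3, b]"
      using x x4 True unfolding thread_def by simp
    moreover have "E a b"
      using ab unfolding innermost_chord_def chord_def by blast
    ultimately show ?thesis
      by blast
  next
    case False
    obtain x5 where x5: "E x4 x5" "p x4 < p x5" "\<forall>z. E x4 z \<longrightarrow> z = x3 \<or> z = x5"
      using innermost_chord_walk_step[OF ab assms(2) _ x4(1,2)] x4(4) False by blast
    have "distinct [a, x1, x2, x3, x4, x5]"
      using x(4-6) x4(2) x5(2) by (intro successively_less_imp_distinct[of p]) simp
    then have "thread E [a, x1, x2, x3, x4, x5]"
      using x x4 x5 unfolding thread_def by simp
    then show ?thesis
      by blast
  qed
qed

end

section \<open>Outerplanar graphs of girth 5 map to the directed triangle\<close>

lemma push_colouring_extend_along_thread:
  assumes og: "oriented_graph V A" and col: "push_colouring (induced_on A (V - set xs)) \<sigma> \<phi>"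
    and thread: "thread (underlying A) (a # xs @ [b])"
    and same: "\<forall>x. x \<notin> set xs \<longrightarrow> \<phi>' x = \<phi> x \<and> \<sigma>' x = \<sigma> x"
    and less_3: "\<forall>x\<in>set xs. \<phi>' x < 3"
    and comp: "\<forall>(y, z)\<in>set (zip (a # xs @ [b]) (xs @ [b])).
                 compatible (A y z) (\<phi>' y) (\<sigma>' y) (\<phi>' z) (\<sigma>' z)"
  shows "push_colouring A \<sigma>' \<phi>'"
proof (rule push_colouring_extend[OF og col same less_3 _ comp])
  have "inner_degree_2 (underlying A) (a # xs @ [b])"
    using thread unfolding thread_def by blast
  note edge = inner_degree_2_edge[OF this]
  show "\<forall>u v. A u v \<longrightarrow> u \<in> set xs \<or> v \<in> set xs \<longrightarrow>
      (u, v) \<in> set (zip (a # xs @ [b]) (xs @ [b])) \<or> (v, u) \<in> set (zip (a # xs @ [b]) (xs @ [b]))"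
    using edge unfolding underlying_def by fastforce
qed

lemma push_colouring_extend_thread4:
  assumes og: "oriented_graph V A" and col: "push_colouring (induced_on A (V - {x1, x2, x3})) \<sigma> \<phi>"
    and thread: "thread (underlying A) [a, x1, x2, x3, b]" and ab: "underlying A a b"
  shows "\<exists>\<sigma> \<phi>. push_colouring A \<sigma> \<phi>"
proof -
  have dist: "distinct [a, x1, x2, x3, b]"
    using thread unfolding thread_def by blast
  have W: "a \<in> V - {x1, x2, x3}" "b \<in> V - {x1, x2, x3}"
    using ab og dist unfolding underlying_def oriented_graph_def by auto
  then have "underlying (induced_on A (V - {x1, x2, x3})) a b"
    using ab unfolding underlying_def induced_on_def by auto
  from push_colouring_compatible[OF col this] W
  have "compatible (A a b) (\<phi> a) (\<sigma> a) (\<phi> b) (\<sigma> b)"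
    unfolding induced_on_def by simp
  then obtain c1 s1 c2 s2 c3 s3 where cs: "compatible (A a x1) (\<phi> a) (\<sigma> a) c1 s1"
      "compatible (A x1 x2) c1 s1 c2 s2" "compatible (A x2 x3) c2 s2 c3 s3"
      "compatible (A x3 b) c3 s3 (\<phi> b) (\<sigma> b)"
    using compatible_path4 compatible_imp_less_3 compatible_imp_neq by metis
  have "push_colouring A (\<sigma>(x1 := s1, x2 := s2, x3 := s3)) (\<phi>(x1 := c1, x2 := c2, x3 := c3))"
    by (rule push_colouring_extend_along_thread[OF og, where xs = "[x1, x2, x3]" and a = a and b = b])
      (use col thread cs dist compatible_imp_less_3 in auto)
  then show ?thesis
    by blast
qed

lemma push_colouring_extend_thread5:
  assumes og: "oriented_graph V A"
    and col: "push_colouring (induced_on A (V - {x1, x2, x3, x4})) \<sigma> \<phi>"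
    and thread: "thread (underlying A) [a, x1, x2, x3, x4, b]"
  shows "\<exists>\<sigma> \<phi>. push_colouring A \<sigma> \<phi>"
proof -
  have dist: "distinct [a, x1, x2, x3, x4, b]"
    using thread unfolding thread_def by blast
  have "\<phi> a < 3" "\<phi> b < 3"
    using col unfolding push_colouring_def by auto
  then obtain c1 s1 c2 s2 c3 s3 c4 s4 where cs: "compatible (A a x1) (\<phi> a) (\<sigma> a) c1 s1"
      "compatible (A x1 x2) c1 s1 c2 s2" "compatible (A x2 x3) c2 s2 c3 s3"
      "compatible (A x3 x4) c3 s3 c4 s4" "compatible (A x4 b) c4 s4 (\<phi> b) (\<sigma> b)"
    using compatible_path5 by metis
  have "push_colouring A (\<sigma>(x1 := s1, x2 := s2, x3 := s3, x4 := s4))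
      (\<phi>(x1 := c1, x2 := c2, x3 := c3, x4 := c4))"
    by (rule push_colouring_extend_along_thread[OF og, where xs = "[x1, x2, x3, x4]" and a = a and b = b])
      (use col thread cs dist compatible_imp_less_3 in auto)
  then show ?thesis
    by blast
qed

lemma push_colouring_reduce_thread:
  assumes og: "oriented_graph V A"
    and smaller: "\<And>X. X \<subseteq> V \<Longrightarrow> X \<noteq> {} \<Longrightarrow> \<exists>\<sigma> \<phi>. push_colouring (induced_on A (V - X)) \<sigma> \<phi>"
    and thread: "(\<exists>a x1 x2 x3 b. underlying A a b \<and> thread (underlying A) [a, x1, x2, x3, b])
       \<or> (\<exists>a x1 x2 x3 x4 b. thread (underlying A) [a, x1, x2, x3, x4, b])"
  shows "\<exists>\<sigma> \<phi>. push_colouring A \<sigma> \<phi>"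
proof -
  have in_V: "underlying A u v \<Longrightarrow> u \<in> V" for u v
    using og unfolding oriented_graph_def underlying_def by blast
  from thread show ?thesis
  proof (elim disjE exE conjE)
    fix a x1 x2 x3 b
    assume ab: "underlying A a b" and thread: "thread (underlying A) [a, x1, x2, x3, b]"
    then have "{x1, x2, x3} \<subseteq> V"
      using in_V unfolding thread_def by auto
    then obtain \<sigma> \<phi> where "push_colouring (induced_on A (V - {x1, x2, x3})) \<sigma> \<phi>"
      using smaller by blast
    then show ?thesis
      using push_colouring_extend_thread4[OF og _ thread ab] by blast
  next
    fix a x1 x2 x3 x4 b
    assume thread: "thread (underlying A) [a, x1, x2, x3, x4, b]"
    then have "{x1, x2, x3, x4} \<subseteq> V"
      using in_V unfolding thread_def by auto
    then obtain \<sigma> \<phi> where "push_colouring (induced_on A (V - {x1, x2, x3, x4})) \<sigma> \<phi>"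
      using smaller by blast
    then show ?thesis
      using push_colouring_extend_thread5[OF og _ thread] by blast
  qed
qed

lemma push_colouring_exists:
  assumes "oriented_graph V A" "inj_on p V" "noncrossing p (underlying A)"
    "girth_at_least V (underlying A) 5"
  shows "\<exists>\<sigma> \<phi>. push_colouring A \<sigma> \<phi>"
  using assms
proof (induction "card V" arbitrary: V A rule: less_induct)
  case less
  have smaller: "\<exists>\<sigma> \<phi>. push_colouring (induced_on A (V - X)) \<sigma> \<phi>" if "X \<subseteq> V" "X \<noteq> {}" for X
  proof (rule less.hyps)
    show "card (V - X) < card V"
      using that less.prems(1) unfolding oriented_graph_def by (intro psubset_card_mono) auto
    show "oriented_graph (V - X) (induced_on A (V - X))"
      using oriented_graph_induced_on less.prems(1) by blast
    show "inj_on p (V - X)"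
      using less.prems(2) inj_on_diff by blast
    show "noncrossing p (underlying (induced_on A (V - X)))"
      unfolding underlying_induced_on using noncrossing_induced_on less.prems(3) .
    show "girth_at_least (V - X) (underlying (induced_on A (V - X))) 5"
      unfolding underlying_induced_on using girth_at_least_induced_on less.prems(4) by blast
  qed
  interpret noncrossing_graph V "underlying A" p
    using less.prems simple_graph_underlying by unfold_locales auto
  consider (empty) "V = {}"
    | (pendant) x where "x \<in> V" "\<forall>y z. underlying A x y \<and> underlying A x z \<longrightarrow> y = z"
    | (min_degree_2) "V \<noteq> {}" "min_degree_2 V (underlying A)"
    unfolding min_degree_2_def by metis
  then show ?case
  proof cases
    case empty
    then have "push_colouring A (\<lambda>_. False) (\<lambda>_. 0)"
      using less.prems(1) unfolding push_colouring_def oriented_graph_def by auto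
    then show ?thesis
      by blast
  next
    case pendant
    then show ?thesis
      using push_colouring_extend_pendant[OF less.prems(1)] smaller[of "{x}"] by blast
  next
    case min_degree_2
    then show ?thesis
      using push_colouring_reduce_thread[OF less.prems(1) smaller] thread_exists less.prems(4) by blast
  qed
qed

lemma outerplanar_girth_5_push_hom_C3:
  assumes "simple_graph V E" "outerplanar V E" "girth_at_least V E 5" "orientation V E A"
  shows "push_hom V A C3_verts C3_arcs"
proof -
  have og: "oriented_graph V A" and E: "underlying A = E"
    using assms orientation_oriented_graph orientation_underlying by blast+
  obtain p where "inj_on p V" "noncrossing p E"
    using outerplanar_noncrossing assms(2) by blast
  then obtain \<sigma> \<phi> where "push_colouring A \<sigma> \<phi>"
    using push_colouring_exists[OF og] assms(3) E by blast
  then show ?thesis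
    using push_colouring_push_hom og unfolding oriented_graph_def by blast
qed

section \<open>The push chromatic number of outerplanar graphs of girth 5\<close>

lemma C3_arcs_iff: "C3_arcs u v \<longleftrightarrow> (u, v) \<in> {(0, 1), (1, 2), (2, 0)}"
  unfolding C3_arcs_def less_3_cases by auto

lemma C3_oriented_graph: "oriented_graph C3_verts C3_arcs"
  unfolding oriented_graph_def C3_verts_def C3_arcs_iff by auto

lemma card_C3_verts: "card C3_verts = 3"
  unfolding C3_verts_def by simp

lemma push_chrom_le_3:
  assumes "(V, E) \<in> O5" "orientation V E A"
  shows "push_chrom V A \<le> 3"
proof -
  have "push_hom V A C3_verts C3_arcs"
    using outerplanar_girth_5_push_hom_C3 assms unfolding O5_def by blast
  then show ?thesis
    unfolding push_chrom_def using C3_oriented_graph card_C3_verts by (intro Least_le) blast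
qed

lemma push_chrom_graph_le_3:
  assumes "(V, E) \<in> O5"
  shows "push_chrom_graph V E \<le> 3"
proof (cases "{push_chrom V A | A. orientation V E A} = {}")
  case True
  then show ?thesis
    unfolding push_chrom_graph_def by simp
next
  case False
  then show ?thesis
    unfolding push_chrom_graph_def by (rule cSup_least) (use push_chrom_le_3 assms in blast)
qed

lemma hom_push_adjacent_neq:
  assumes "oriented_graph W B" "hom V (push S A) W B \<phi>" "A u v"
  shows "\<phi> u \<noteq> \<phi> v"
proof -
  have "push S A u v \<or> push S A v u"
    using assms(3) unfolding push_def by auto
  then have "B (\<phi> u) (\<phi> v) \<or> B (\<phi> v) (\<phi> u)"
    using assms(2) unfolding hom_def by blast
  then show ?thesis
    using assms(1) unfolding oriented_graph_def by auto
qed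

lemma orientation_underlying_self: "\<forall>u v. A u v \<longrightarrow> \<not> A v u \<Longrightarrow> orientation V (underlying A) A"
  unfolding orientation_def underlying_def by blast

definition pentagon_arcs :: "nat \<Rightarrow> nat \<Rightarrow> bool" where
  "pentagon_arcs u v \<longleftrightarrow> (u, v) \<in> {(0, 1), (1, 2), (2, 3), (3, 4), (4, 0)}"

lemma underlying_pentagon_arcs: "underlying pentagon_arcs u v \<longleftrightarrow>
    (u, v) \<in> {(0, 1), (1, 0), (1, 2), (2, 1), (2, 3), (3, 2), (3, 4), (4, 3), (4, 0), (0, 4)}"
  unfolding underlying_def pentagon_arcs_def by auto

lemma underlying_pentagon_arcs_simps:
  "underlying pentagon_arcs 0 v \<longleftrightarrow> v = 1 \<or> v = 4"
  "underlying pentagon_arcs 1 v \<longleftrightarrow> v = 0 \<or> v = 2"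
  "underlying pentagon_arcs (Suc 0) v \<longleftrightarrow> v = 0 \<or> v = 2"
  "underlying pentagon_arcs 2 v \<longleftrightarrow> v = 1 \<or> v = 3"
  "underlying pentagon_arcs 3 v \<longleftrightarrow> v = 2 \<or> v = 4"
  "underlying pentagon_arcs 4 v \<longleftrightarrow> v = 3 \<or> v = 0"
  unfolding underlying_pentagon_arcs by auto

lemma underlying_pentagon_arcs_cases:
  "underlying pentagon_arcs u v \<Longrightarrow> u = 0 \<or> u = 1 \<or> u = 2 \<or> u = 3 \<or> u = 4"
  unfolding underlying_pentagon_arcs by auto

lemma pentagon_no_triangle:
  "underlying pentagon_arcs x y \<Longrightarrow> underlying pentagon_arcs y z
    \<Longrightarrow> underlying pentagon_arcs z x \<Longrightarrow> False"
  by (frule underlying_pentagon_arcs_cases, elim disjE) (auto simp: underlying_pentagon_arcs_simps)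

lemma pentagon_no_square:
  "underlying pentagon_arcs x y \<Longrightarrow> underlying pentagon_arcs y z \<Longrightarrow> underlying pentagon_arcs z w
    \<Longrightarrow> underlying pentagon_arcs w x \<Longrightarrow> distinct [x, y, z, w] \<Longrightarrow> False"
  by (frule underlying_pentagon_arcs_cases, elim disjE) (auto simp: underlying_pentagon_arcs_simps)
lemma pentagon_girth: "girth_at_least {0..<5} (underlying pentagon_arcs) 5"
  unfolding girth_at_least_def
proof (intro allI impI)
  fix cs
  assume cycle: "is_cycle {0..<5} (underlying pentagon_arcs) cs"
  have "length cs = card (set cs)"
    using cycle distinct_card unfolding is_cycle_def by metis
  also have "\<dots> \<le> 5"
    using cycle card_mono[of "{0..<5::nat}" "set cs"] unfolding is_cycle_def by simp
  finally have "length cs \<le> 5" .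
  moreover have "length cs \<noteq> 3"
  proof
    assume "length cs = 3"
    then obtain x y z where "cs = [x, y, z]"
      by (auto simp: length_Suc_conv eval_nat_numeral)
    then show False
      using cycle pentagon_no_triangle unfolding is_cycle_iff_successively by auto
  qed
  moreover have "length cs \<noteq> 4"
  proof
    assume "length cs = 4"
    then obtain x y z w where "cs = [x, y, z, w]"
      by (auto simp: length_Suc_conv eval_nat_numeral)
    then show False
      using cycle pentagon_no_square unfolding is_cycle_iff_successively by auto
  qed
  ultimately show "5 \<le> length cs"
    using cycle unfolding is_cycle_def by linarith
qed

lemma pentagon_in_O5: "({0..<5}, underlying pentagon_arcs) \<in> O5"
proof -
  have "simple_graph {0..<5} (underlying pentagon_arcs)"
    unfolding simple_graph_def underlying_pentagon_arcs by auto
  moreover have "outerplanar {0..<5} (underlying pentagon_arcs)"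
    unfolding outerplanar_def
  proof (intro exI conjI)
    show "bij_betw id {0..<5} {0..<card {0..<5::nat}}"
      by simp
    show "\<forall>a b c d. underlying pentagon_arcs a b \<and> underlying pentagon_arcs c d \<longrightarrow>
        \<not> (id a < id c \<and> id c < id b \<and> id b < id d)"
      unfolding underlying_pentagon_arcs by auto
  qed
  ultimately show ?thesis
    unfolding O5_def using pentagon_girth by blast
qed

lemma pentagon_arcs_antisym: "\<forall>u v. pentagon_arcs u v \<longrightarrow> \<not> pentagon_arcs v u"
  unfolding pentagon_arcs_def by auto

lemma three_le_card:
  "finite W \<Longrightarrow> {x, y, z} \<subseteq> W \<Longrightarrow> x \<noteq> y \<Longrightarrow> y \<noteq> z \<Longrightarrow> x \<noteq> z \<Longrightarrow> 3 \<le> card W"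
  using card_mono[of W "{x, y, z}"] by simp

lemma pentagon_push_hom_card:
  assumes W: "oriented_graph W B" and hom: "push_hom {0..<5} pentagon_arcs W B"
  shows "3 \<le> card W"
proof -
  obtain S \<phi> where \<phi>: "hom {0..<5} (push S pentagon_arcs) W B \<phi>"
    using hom unfolding push_hom_def by blast
  have neq: "\<phi> 0 \<noteq> \<phi> 1" "\<phi> 1 \<noteq> \<phi> 2" "\<phi> 2 \<noteq> \<phi> 3" "\<phi> 3 \<noteq> \<phi> 4" "\<phi> 4 \<noteq> \<phi> 0"
    using hom_push_adjacent_neq[OF W \<phi>] unfolding pentagon_arcs_def by auto
  have "finite W" "{\<phi> 0, \<phi> 1, \<phi> 2, \<phi> 3, \<phi> 4} \<subseteq> W"
    using W \<phi> unfolding oriented_graph_def hom_def by auto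
  then show ?thesis
    using three_le_card[of W "\<phi> 0" "\<phi> 1" "\<phi> 2"] three_le_card[of W "\<phi> 2" "\<phi> 3" "\<phi> 4"] neq
    by (cases "\<phi> 0 = \<phi> 2") auto
qed

lemma pentagon_push_chrom: "push_chrom {0..<5} pentagon_arcs = 3"
  unfolding push_chrom_def
proof (rule Least_equality)
  have "push_hom {0..<5} pentagon_arcs C3_verts C3_arcs"
    using outerplanar_girth_5_push_hom_C3 pentagon_in_O5
      orientation_underlying_self[OF pentagon_arcs_antisym] unfolding O5_def by blast
  then show "\<exists>W B. oriented_graph (W :: nat set) B \<and> card W = 3 \<and> push_hom {0..<5} pentagon_arcs W B"
    using C3_oriented_graph card_C3_verts by blast
qed (use pentagon_push_hom_card in blast)

lemma push_chrom_graph_pentagon: "push_chrom_graph {0..<5} (underlying pentagon_arcs) = 3"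
  unfolding push_chrom_graph_def
proof (rule cSup_eq_maximum)
  show "3 \<in> {push_chrom {0..<5} A |A. orientation {0..<5} (underlying pentagon_arcs) A}"
    using pentagon_push_chrom orientation_underlying_self[OF pentagon_arcs_antisym] by force
qed (use push_chrom_le_3 pentagon_in_O5 in blast)

lemma push_chrom_family_O5: "push_chrom_family O5 = 3"
  unfolding push_chrom_family_def
proof (rule cSup_eq_maximum)
  show "3 \<in> {push_chrom_graph V E |V E. (V, E) \<in> O5}"
    using push_chrom_graph_pentagon pentagon_in_O5 by force
qed (use push_chrom_graph_le_3 in blast)

theorem theorem2:
  shows "(\<forall>(V :: 'a set) E A. simple_graph V E \<and> outerplanar V E \<and> girth_at_least V E 5
            \<and> orientation V E A \<longrightarrow> push_hom V A C3_verts C3_arcs)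
         \<and> push_chrom_family O5 = 3"
  using outerplanar_girth_5_push_hom_C3 push_chrom_family_O5 by blast

end
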